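(* Let $\lambda$ be a partition of $n$, let $l_1(\lambda)$ be the multiplicity of the part $1$ in $\lambda$, and let $\mathrm{fch}(\lambda)=\{h(1,1),h(2,1),\dots,h(l(\lambda),1)\}$ be the set of first-column hook lengths of $\lambda$, where $l(\lambda)$ is the number of parts. Let $f_\lambda$ be the degree of the irreducible character of $\mathsf{S}_n$ labelled by $\lambda$. If $q$ is a prime with $n-l_1(\lambda)\le q\le n$ and $q\nmid f_\lambda$, then $q,2q,\dots,\lfloor n/q\rfloor q\in\mathrm{fch}(\lambda)$.
   Context: $h(i,j)$ denotes the hook length at node $(i,j)$ of the Young diagram of $\lambda$ (number of nodes to the right of and below $(i,j)$, including $(i,j)$). $f_\lambda=n!/\prod_{(i,j)}h(i,j)$. *)

theory Defs
  imports Main "HOL-Computational_Algebra.Primes"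
begin

text \<open>A partition of n: a weakly decreasing list of positive parts summing to n.
  Rows and columns are indexed from 1: part i is lam ! (i - 1).\<close>

definition is_partition :: "nat list \<Rightarrow> nat \<Rightarrow> bool" where
  "is_partition lam n \<longleftrightarrow> sorted (rev lam) \<and> (\<forall>x\<in>set lam. 0 < x) \<and> sum_list lam = n"

definition part :: "nat list \<Rightarrow> nat \<Rightarrow> nat" where
  "part lam i = (if 1 \<le> i \<and> i \<le> length lam then lam ! (i - 1) else 0)"

definition num_parts :: "nat list \<Rightarrow> nat" where
  "num_parts lam = length lam"

definition conj_part :: "nat list \<Rightarrow> nat \<Rightarrow> nat" where
  "conj_part lam j = card {i. 1 \<le> i \<and> i \<le> length lam \<and> j \<le> part lam i}"

definition young_diagram :: "nat list \<Rightarrow> (nat \<times> nat) set" where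
  "young_diagram lam = {(i, j). 1 \<le> i \<and> i \<le> length lam \<and> 1 \<le> j \<and> j \<le> part lam i}"

definition hook :: "nat list \<Rightarrow> nat \<Rightarrow> nat \<Rightarrow> nat" where
  "hook lam i j = (part lam i - j) + (conj_part lam j - i) + 1"

text \<open>Hook length formula f_lambda = n! / prod of hook lengths.\<close>
definition f_lam :: "nat list \<Rightarrow> nat" where
  "f_lam lam = fact (sum_list lam) div (\<Prod>(i, j)\<in>young_diagram lam. hook lam i j)"

definition mult_one :: "nat list \<Rightarrow> nat" where
  "mult_one lam = count_list lam 1"

definition fch :: "nat list \<Rightarrow> nat set" where
  "fch lam = {hook lam i 1 | i. 1 \<le> i \<and> i \<le> num_parts lam}"

end

theory Submission
  imports Defs
begin

text \<open>
  Write beta i = h(i,1) for the (distinct) first-column hook lengths. The hooks of row i and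
  the differences beta i - beta k (k > i) partition {1..beta i}; reading this modulo d on a
  d-abacus shows that at most n div d hook lengths are divisible by d, exactly as for the
  numbers 1, ..., n. Comparing q-adic valuations with Legendre's formula then shows that the
  hook product divides n!, and that q divides f_lam unless exactly n div q hook lengths are
  divisible by q.

  A hook off the first column satisfies h(i,j) + l(lam) <= n, and l(lam) > l_1(lam) because
  row i has a part at least 2; so it is shorter than q. Thus if q does not divide f_lam, the
  hooks divisible by q are n div q distinct first-column hooks in {1..n}, i.e. exactly
  q, 2q, ..., (n div q) q.
\<close>

lemma card_multiples_atLeastAtMost:
  fixes d m :: nat
  assumes "0 < d"
  shows "card {t \<in> {1..m}. d dvd t} = m div d"
proof -
  have "{t \<in> {1..m}. d dvd t} = (\<lambda>k. d * k) ` {1..m div d}"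
    using assms by (auto simp: less_eq_div_iff_mult_less_eq mult.commute)
  moreover have "inj_on (\<lambda>k. d * k) {1..m div d}"
    using assms by (auto intro: inj_onI)
  ultimately show ?thesis
    by (simp add: card_image)
qed

lemma sum_lessThan_card_le_sum:
  fixes B :: "nat set"
  assumes "finite B"
  shows "(\<Sum>k<card B. k) \<le> \<Sum>B"
  using assms
proof (induction "card B" arbitrary: B)
  case 0
  then show ?case by simp
next
  case (Suc m)
  define M where "M = Max B"
  have M: "M \<in> B"
    using Suc M_def by (metis Max_in card_0_eq nat.distinct(1))
  have "card B \<le> card {0..M}"
    using Suc.prems M_def by (intro card_mono) auto
  then have "m \<le> M"
    using Suc.hyps(2) by simp
  moreover have "(\<Sum>k<m. k) \<le> \<Sum>(B - {M})"
  proof -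
    have "card (B - {M}) = m"
      using Suc.hyps(2) Suc.prems M by simp
    with Suc.hyps(1)[of "B - {M}"] Suc.prems show ?thesis
      by simp
  qed
  ultimately show ?case
    using Suc.prems Suc.hyps(2)[symmetric] M by (simp add: sum.remove)
qed

lemma multiplicity_eq_card_prime_power_dvd:
  fixes p h N :: nat
  assumes "prime p" "0 < h" "h \<le> N"
  shows "multiplicity p h = card {e \<in> {1..N}. p ^ e dvd h}"
proof -
  let ?m = "multiplicity p h"
  have "?m < 2 ^ ?m"
    by (rule less_exp)
  also have "\<dots> \<le> p ^ ?m"
    using prime_ge_2_nat[OF assms(1)] by (rule power_mono) simp
  also have "\<dots> \<le> h"
    using assms(2) by (intro dvd_imp_le multiplicity_dvd)
  finally have "?m \<le> N"
    using assms(3) by linarith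
  moreover have power_dvd_iff: "p ^ e dvd h \<longleftrightarrow> e \<le> ?m" for e
    using power_dvd_iff_le_multiplicity[of h p e] assms by (auto dest: prime_gt_1_nat)
  ultimately have "{e \<in> {1..N}. p ^ e dvd h} = {1..?m}"
    unfolding power_dvd_iff by auto
  then show ?thesis
    by simp
qed

lemma multiplicity_prod_eq_sum_card_prime_power_dvd:
  fixes f :: "'a \<Rightarrow> nat"
  assumes "prime p" "finite A" "\<And>x. x \<in> A \<Longrightarrow> 0 < f x \<and> f x \<le> N"
  shows "multiplicity p (\<Prod>x\<in>A. f x) = (\<Sum>e\<in>{1..N}. card {x \<in> A. p ^ e dvd f x})"
proof -
  have "multiplicity p (\<Prod>x\<in>A. f x) = (\<Sum>x\<in>A. multiplicity p (f x))"
    using assms by (intro prime_elem_multiplicity_prod_distrib) (auto simp: image_iff)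
  also have "\<dots> = (\<Sum>x\<in>A. card {e \<in> {1..N}. p ^ e dvd f x})"
    using assms by (intro sum.cong refl multiplicity_eq_card_prime_power_dvd) auto
  also have "\<dots> = (\<Sum>x\<in>A. \<Sum>e\<in>{1..N}. if p ^ e dvd f x then 1 else 0)"
    by (simp add: sum.inter_filter[symmetric])
  also have "\<dots> = (\<Sum>e\<in>{1..N}. \<Sum>x\<in>A. if p ^ e dvd f x then 1 else 0)"
    by (rule sum.swap)
  also have "\<dots> = (\<Sum>e\<in>{1..N}. card {x \<in> A. p ^ e dvd f x})"
    using assms(2) by (simp add: sum.inter_filter[symmetric])
  finally show ?thesis .
qed

lemma multiplicity_fact_eq_sum_div:
  fixes p n :: nat
  assumes "prime p"
  shows "multiplicity p (fact n :: nat) = (\<Sum>e\<in>{1..n}. n div p ^ e)"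
proof -
  have "multiplicity p (fact n :: nat) = (\<Sum>e\<in>{1..n}. card {x \<in> {1..n}. p ^ e dvd x})"
    unfolding fact_prod using multiplicity_prod_eq_sum_card_prime_power_dvd[OF assms, of "{1..n}" id n]
    by simp
  also have "\<dots> = (\<Sum>e\<in>{1..n}. n div p ^ e)"
    using assms by (intro sum.cong refl card_multiples_atLeastAtMost) (simp add: prime_gt_0_nat)
  finally show ?thesis .
qed

context
  fixes A :: "'a set" and f :: "'a \<Rightarrow> nat" and n :: nat
  assumes finite: "finite A"
    and bounded: "\<And>x. x \<in> A \<Longrightarrow> 0 < f x \<and> f x \<le> n"
    and card_dvd_le: "\<And>d. 0 < d \<Longrightarrow> card {x \<in> A. d dvd f x} \<le> n div d"
begin

lemma multiplicity_prod_le_multiplicity_fact: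
  assumes "prime p"
  shows "multiplicity p (\<Prod>x\<in>A. f x) \<le> multiplicity p (fact n :: nat)"
proof -
  have "(\<Sum>e\<in>{1..n}. card {x \<in> A. p ^ e dvd f x}) \<le> (\<Sum>e\<in>{1..n}. n div p ^ e)"
    using assms by (intro sum_mono card_dvd_le) (simp add: prime_gt_0_nat)
  then show ?thesis
    by (simp only: multiplicity_prod_eq_sum_card_prime_power_dvd[OF assms finite bounded]
        multiplicity_fact_eq_sum_div[OF assms])
qed

lemma multiplicity_prod_less_multiplicity_fact:
  assumes "prime p" and "card {x \<in> A. p dvd f x} < n div p"
  shows "multiplicity p (\<Prod>x\<in>A. f x) < multiplicity p (fact n :: nat)"
proof -
  have "1 \<le> n"
    using assms(2) by (cases n) auto
  then have "(\<Sum>e\<in>{1..n}. card {x \<in> A. p ^ e dvd f x}) < (\<Sum>e\<in>{1..n}. n div p ^ e)"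
    using assms card_dvd_le by (intro sum_strict_mono_ex1) (auto simp: prime_gt_0_nat intro!: bexI[of _ 1])
  then show ?thesis
    by (simp only: multiplicity_prod_eq_sum_card_prime_power_dvd[OF assms(1) finite bounded]
        multiplicity_fact_eq_sum_div[OF assms(1)])
qed

lemma prod_dvd_fact: "(\<Prod>x\<in>A. f x) dvd fact n"
proof (rule multiplicity_le_imp_dvd)
  show "(\<Prod>x\<in>A. f x) \<noteq> 0"
    using finite bounded by auto
qed (rule multiplicity_prod_le_multiplicity_fact)

lemma prime_dvd_fact_div_prod:
  assumes "prime q" and "card {x \<in> A. q dvd f x} < n div q"
  shows "q dvd fact n div (\<Prod>x\<in>A. f x)"
proof (rule ccontr)
  let ?H = "\<Prod>x\<in>A. f x"
  assume not_dvd: "\<not> q dvd fact n div ?H"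
  have split: "fact n = (fact n div ?H) * ?H"
    using prod_dvd_fact by simp
  then have "fact n div ?H \<noteq> 0 \<and> ?H \<noteq> 0"
    by (metis fact_nonzero mult_eq_0_iff)
  then have "multiplicity q (fact n :: nat) = multiplicity q (fact n div ?H) + multiplicity q ?H"
    using assms(1) by (subst split) (simp add: prime_elem_multiplicity_mult_distrib)
  also have "multiplicity q (fact n div ?H) = 0"
    using not_dvd by (rule not_dvd_imp_multiplicity_0)
  finally show False
    using multiplicity_prod_less_multiplicity_fact[OF assms] by simp
qed

end

locale integer_partition =
  fixes lam :: "nat list" and n :: nat
  assumes is_partition: "is_partition lam n"
begin

lemma part_pos: "1 \<le> i \<Longrightarrow> i \<le> length lam \<Longrightarrow> 0 < part lam i"
  using is_partition nth_mem[of "i - 1" lam] by (auto simp: is_partition_def part_def)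

lemma part_antimono: "1 \<le> i \<Longrightarrow> i \<le> i' \<Longrightarrow> part lam i' \<le> part lam i"
  using is_partition by (auto simp: is_partition_def part_def intro!: sorted_rev_nth_mono)

lemma sum_part: "(\<Sum>i=1..length lam. part lam i) = n"
proof -
  have "(\<Sum>i=1..length lam. part lam i) = (\<Sum>k<length lam. part lam (Suc k))"
    using sum.atLeast1_atMost_eq[of "part lam" "length lam"] by simp
  also have "\<dots> = (\<Sum>k<length lam. lam ! k)"
    by (intro sum.cong) (auto simp: part_def)
  also have "\<dots> = n"
    using is_partition by (simp add: is_partition_def sum_list_sum_nth atLeast0LessThan)
  finally show ?thesis .
qed

lemma le_conj_part_iff:
  assumes "1 \<le> i" "1 \<le> j"
  shows "i \<le> conj_part lam j \<longleftrightarrow> i \<le> length lam \<and> j \<le> part lam i"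
proof -
  define S where "S = {i. 1 \<le> i \<and> i \<le> length lam \<and> j \<le> part lam i}"
  have conj: "conj_part lam j = card S"
    by (simp add: S_def conj_part_def)
  have "finite S"
    by (rule finite_subset[of _ "{1..length lam}"]) (auto simp: S_def)
  have down_closed: "i' \<in> S" if "i \<in> S" "1 \<le> i'" "i' \<le> i" for i i'
    using that part_antimono[of i' i] by (auto simp: S_def)
  show ?thesis
  proof
    assume "i \<le> conj_part lam j"
    show "i \<le> length lam \<and> j \<le> part lam i"
    proof (rule ccontr)
      assume "\<not> ?thesis"
      then have "i \<notin> S"
        by (simp add: S_def)
      then have "S \<subseteq> {1..i - 1}"
        using down_closed assms unfolding S_def by (force simp: not_le)
      then have "card S \<le> i - 1"
        using card_mono[of "{1..i - 1}" S] by simp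
      with \<open>i \<le> conj_part lam j\<close> conj assms show False
        by simp
    qed
  next
    assume "i \<le> length lam \<and> j \<le> part lam i"
    then have "{1..i} \<subseteq> S"
      using down_closed assms by (auto simp: S_def)
    then have "card {1..i} \<le> card S"
      using \<open>finite S\<close> by (rule card_mono[rotated])
    then show "i \<le> conj_part lam j"
      using conj by simp
  qed
qed

lemma conj_part_le_length: "conj_part lam j \<le> length lam"
  unfolding conj_part_def by (rule order.trans[OF card_mono[of "{1..length lam}"]]) auto

lemma conj_part_one: "conj_part lam 1 = length lam"
proof -
  have "{i. 1 \<le> i \<and> i \<le> length lam \<and> 1 \<le> part lam i} = {1..length lam}"
    using part_pos by fastforce
  then show ?thesis
    by (simp add: conj_part_def)
qed

lemma conj_part_antimono:
  assumes "1 \<le> j" "j \<le> j'"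
  shows "conj_part lam j' \<le> conj_part lam j"
proof (cases "conj_part lam j' = 0")
  case False
  then have "conj_part lam j' \<le> length lam \<and> j' \<le> part lam (conj_part lam j')"
    using le_conj_part_iff[of "conj_part lam j'" j'] assms by simp
  then show ?thesis
    using le_conj_part_iff[of "conj_part lam j'" j] assms False by simp
qed simp

definition beta :: "nat \<Rightarrow> nat" where
  "beta i = part lam i + length lam - i"

lemma beta_strict_antimono: "1 \<le> i \<Longrightarrow> i < k \<Longrightarrow> k \<le> length lam \<Longrightarrow> beta k < beta i"
  using part_antimono[of i k] by (simp add: beta_def)

lemma inj_on_beta: "inj_on beta {1..length lam}"
  by (rule inj_onI) (metis atLeastAtMost_iff beta_strict_antimono less_irrefl nat_neq_iff)

lemma hook_first_column: "1 \<le> i \<Longrightarrow> i \<le> length lam \<Longrightarrow> hook lam i 1 = beta i"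
  using part_pos[of i] conj_part_one by (simp add: hook_def beta_def)

lemma hook_pos_le_beta:
  assumes "1 \<le> i" "i \<le> length lam" "1 \<le> j" "j \<le> part lam i"
  shows "0 < hook lam i j \<and> hook lam i j \<le> beta i"
  using assms conj_part_le_length[of j] by (simp add: hook_def beta_def)

lemma hook_row_strict_antimono:
  assumes "1 \<le> i" "i \<le> length lam" "1 \<le> j" "j < j'" "j' \<le> part lam i"
  shows "hook lam i j' < hook lam i j"
  using assms le_conj_part_iff[of i j'] conj_part_antimono[of j j'] by (simp add: hook_def)

lemma hook_ne_beta_diff:
  assumes "1 \<le> i" "i < k" "k \<le> length lam" "1 \<le> j" "j \<le> part lam i"
  shows "hook lam i j \<noteq> beta i - beta k"
proof
  assume "hook lam i j = beta i - beta k"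
  moreover have "i \<le> conj_part lam j"
    using le_conj_part_iff[of i j] assms by simp
  moreover have "beta k < beta i" "part lam k \<le> part lam i"
    using assms beta_strict_antimono part_antimono[of i k] by simp_all
  ultimately have "conj_part lam j + part lam k + 1 = j + k"
    using assms conj_part_le_length[of j] by (simp add: hook_def beta_def)
  then show False
    using le_conj_part_iff[of k j] assms by (cases "j \<le> part lam k") simp_all
qed

lemma
  assumes "1 \<le> i" "i \<le> length lam"
  shows row_hooks_Un_beta_diffs:
      "hook lam i ` {1..part lam i} \<union> (\<lambda>k. beta i - beta k) ` {i+1..length lam} = {1..beta i}"
    and row_hooks_Int_beta_diffs:
      "hook lam i ` {1..part lam i} \<inter> (\<lambda>k. beta i - beta k) ` {i+1..length lam} = {}"
    and inj_on_row_hooks: "inj_on (hook lam i) {1..part lam i}"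
    and inj_on_beta_diffs: "inj_on (\<lambda>k. beta i - beta k) {i+1..length lam}"
proof -
  show inj_hooks: "inj_on (hook lam i) {1..part lam i}"
  proof (rule inj_onI)
    fix a b
    assume "a \<in> {1..part lam i}" "b \<in> {1..part lam i}" "hook lam i a = hook lam i b"
    then show "a = b"
      using hook_row_strict_antimono[of i a b] hook_row_strict_antimono[of i b a] assms
      by (cases a b rule: linorder_cases) auto
  qed
  show inj_diffs: "inj_on (\<lambda>k. beta i - beta k) {i+1..length lam}"
  proof (rule inj_onI)
    fix a b
    assume a: "a \<in> {i+1..length lam}" and b: "b \<in> {i+1..length lam}"
      and "beta i - beta a = beta i - beta b"
    moreover have "beta a < beta i" "beta b < beta i"
      using a b assms beta_strict_antimono[of i] by simp_all
    ultimately have "beta a = beta b"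
      by simp
    then show "a = b"
      using inj_onD[OF inj_on_beta] a b assms by simp
  qed
  have "hook lam i j \<noteq> beta i - beta k" if "j \<in> {1..part lam i}" "k \<in> {i+1..length lam}" for j k
    using hook_ne_beta_diff[of i k j] that assms by simp
  then show disjoint: "hook lam i ` {1..part lam i} \<inter> (\<lambda>k. beta i - beta k) ` {i+1..length lam} = {}"
    by blast
  have "hook lam i j \<in> {1..beta i}" if "j \<in> {1..part lam i}" for j
    using hook_pos_le_beta[of i j] that assms by simp
  moreover have "beta i - beta k \<in> {1..beta i}" if "k \<in> {i+1..length lam}" for k
    using beta_strict_antimono[of i k] that assms by simp
  ultimately have "hook lam i ` {1..part lam i} \<union> (\<lambda>k. beta i - beta k) ` {i+1..length lam} \<subseteq> {1..beta i}"
    by blast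
  moreover have "card (hook lam i ` {1..part lam i} \<union> (\<lambda>k. beta i - beta k) ` {i+1..length lam})
      = card (hook lam i ` {1..part lam i}) + card ((\<lambda>k. beta i - beta k) ` {i+1..length lam})"
    by (rule card_Un_disjoint[OF _ _ disjoint]) simp_all
  moreover have "\<dots> = card {1..beta i}"
    using assms card_image[OF inj_hooks] card_image[OF inj_diffs] by (simp add: beta_def)
  ultimately show "hook lam i ` {1..part lam i} \<union> (\<lambda>k. beta i - beta k) ` {i+1..length lam} = {1..beta i}"
    by (intro card_subset_eq) simp_all
qed

definition beads_below :: "nat \<Rightarrow> nat \<Rightarrow> nat" where
  "beads_below d i = card {k \<in> {i+1..length lam}. beta k mod d = beta i mod d}"

lemma card_row_hooks_dvd:
  assumes "1 \<le> i" "i \<le> length lam" "0 < d"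
  shows "d * card {j \<in> {1..part lam i}. d dvd hook lam i j} + (beta i mod d + d * beads_below d i)
    = beta i"
proof -
  let ?hooks = "{j \<in> {1..part lam i}. d dvd hook lam i j}"
  let ?below = "{k \<in> {i+1..length lam}. beta k mod d = beta i mod d}"
  have dvd_diff: "d dvd beta i - beta k \<longleftrightarrow> beta k mod d = beta i mod d" if "k \<in> {i+1..length lam}" for k
    using that beta_strict_antimono[of i k] assms(1) mod_eq_dvd_iff_nat[of "beta k" "beta i" d] by auto
  have "{t \<in> {1..beta i}. d dvd t}
      = {t \<in> hook lam i ` {1..part lam i}. d dvd t} \<union> {t \<in> (\<lambda>k. beta i - beta k) ` {i+1..length lam}. d dvd t}"
    unfolding row_hooks_Un_beta_diffs[OF assms(1,2), symmetric] by blast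
  also have "{t \<in> hook lam i ` {1..part lam i}. d dvd t} = hook lam i ` ?hooks"
    by blast
  also have "{t \<in> (\<lambda>k. beta i - beta k) ` {i+1..length lam}. d dvd t} = (\<lambda>k. beta i - beta k) ` ?below"
    using dvd_diff by blast
  finally have multiples:
    "{t \<in> {1..beta i}. d dvd t} = hook lam i ` ?hooks \<union> (\<lambda>k. beta i - beta k) ` ?below" .
  have disjoint: "hook lam i ` ?hooks \<inter> (\<lambda>k. beta i - beta k) ` ?below = {}"
    using row_hooks_Int_beta_diffs[OF assms(1,2)] by blast
  have "beta i div d = card {t \<in> {1..beta i}. d dvd t}"
    using card_multiples_atLeastAtMost[OF assms(3)] by simp
  also have "\<dots> = card (hook lam i ` ?hooks) + card ((\<lambda>k. beta i - beta k) ` ?below)"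
    unfolding multiples by (rule card_Un_disjoint[OF _ _ disjoint]) simp_all
  also have "card (hook lam i ` ?hooks) = card ?hooks"
    by (rule card_image, rule inj_on_subset[OF inj_on_row_hooks[OF assms(1,2)]]) blast
  also have "card ((\<lambda>k. beta i - beta k) ` ?below) = beads_below d i"
    unfolding beads_below_def
    by (rule card_image, rule inj_on_subset[OF inj_on_beta_diffs[OF assms(1,2)]]) blast
  finally have "card ?hooks + beads_below d i = beta i div d"
    by simp
  then have "d * card ?hooks + d * beads_below d i = d * (beta i div d)"
    by (simp flip: add_mult_distrib2)
  then show ?thesis
    using mult_div_mod_eq[of d "beta i"] by linarith
qed

lemma sum_beta: "(\<Sum>i=1..length lam. beta i) = n + (\<Sum>k<length lam. k)"
proof -
  have "(\<Sum>i=1..length lam. beta i) = (\<Sum>i=1..length lam. part lam i) + (\<Sum>i=1..length lam. length lam - i)"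
    by (simp add: beta_def sum.distrib[symmetric])
  also have "(\<Sum>i=1..length lam. length lam - i) = (\<Sum>k<length lam. length lam - Suc k)"
    using sum.atLeast1_atMost_eq[of "\<lambda>i. length lam - i" "length lam"] by simp
  also have "\<dots> = (\<Sum>k<length lam. k)"
    by (rule sum.nat_diff_reindex)
  finally show ?thesis
    using sum_part by simp
qed

text \<open>On James' d-abacus the bead beta i lies on runner beta i mod d, and beads_below d i
  counts the beads beneath it on that runner; sliding all beads up their runners therefore
  moves them to distinct positions.\<close>

lemma inj_on_slide_up:
  assumes "0 < d"
  shows "inj_on (\<lambda>i. beta i mod d + d * beads_below d i) {1..length lam}"
proof -
  have "beta i mod d + d * beads_below d i \<noteq> beta i' mod d + d * beads_below d i'"
    if "1 \<le> i" "i < i'" "i' \<le> length lam" for i i'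
  proof
    assume eq: "beta i mod d + d * beads_below d i = beta i' mod d + d * beads_below d i'"
    have "beta i mod d = (beta i mod d + d * beads_below d i) mod d"
      by simp
    also have "\<dots> = beta i' mod d"
      unfolding eq by simp
    finally have runner: "beta i mod d = beta i' mod d" .
    with eq assms have "beads_below d i = beads_below d i'"
      by simp
    moreover have "insert i' {k \<in> {i'+1..length lam}. beta k mod d = beta i' mod d}
        \<subseteq> {k \<in> {i+1..length lam}. beta k mod d = beta i mod d}"
      using that runner by auto
    then have "card (insert i' {k \<in> {i'+1..length lam}. beta k mod d = beta i' mod d})
        \<le> beads_below d i"
      unfolding beads_below_def by (intro card_mono) auto
    then have "Suc (beads_below d i') \<le> beads_below d i"
      unfolding beads_below_def by (subst (asm) card_insert_disjoint) auto
    ultimately show False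
      by simp
  qed
  then show ?thesis
    by (intro inj_onI) (metis atLeastAtMost_iff linorder_neqE_nat)
qed

lemma card_hooks_dvd_le:
  assumes "0 < d"
  shows "card {x \<in> young_diagram lam. d dvd case_prod (hook lam) x} \<le> n div d"
proof -
  let ?slide = "\<lambda>i. beta i mod d + d * beads_below d i"
  have "{x \<in> young_diagram lam. d dvd case_prod (hook lam) x}
      = Sigma {1..length lam} (\<lambda>i. {j \<in> {1..part lam i}. d dvd hook lam i j})"
    by (auto simp: young_diagram_def)
  then have "d * card {x \<in> young_diagram lam. d dvd case_prod (hook lam) x} + (\<Sum>i=1..length lam. ?slide i)
      = (\<Sum>i=1..length lam. beta i)"
    using card_row_hooks_dvd assms by (simp add: sum_distrib_left sum.distrib[symmetric])
  also have "\<dots> = n + (\<Sum>k<length lam. k)"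
    by (rule sum_beta)
  finally have "d * card {x \<in> young_diagram lam. d dvd case_prod (hook lam) x} + (\<Sum>i=1..length lam. ?slide i)
      = n + (\<Sum>k<length lam. k)" .
  moreover have "(\<Sum>k<length lam. k) \<le> (\<Sum>i=1..length lam. ?slide i)"
    using sum_lessThan_card_le_sum[of "?slide ` {1..length lam}"] inj_on_slide_up[OF assms]
    by (simp add: card_image sum.reindex)
  ultimately have "d * card {x \<in> young_diagram lam. d dvd case_prod (hook lam) x} \<le> n"
    by linarith
  then show ?thesis
    using assms by (simp add: less_eq_div_iff_mult_less_eq mult.commute)
qed

lemma sum_part_minus_one: "(\<Sum>i=1..length lam. part lam i - 1) + length lam = n"
proof -
  have "(\<Sum>i=1..length lam. part lam i - 1) + length lam
      = (\<Sum>i=1..length lam. part lam i - 1) + (\<Sum>i=1..length lam. 1)"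
    by simp
  also have "\<dots> = (\<Sum>i=1..length lam. part lam i - 1 + 1)"
    by (rule sum.distrib[symmetric])
  also have "\<dots> = (\<Sum>i=1..length lam. part lam i)"
    using part_pos by (intro sum.cong refl) simp
  finally show ?thesis
    using sum_part by simp
qed

lemma beta_le: "1 \<le> i \<Longrightarrow> i \<le> length lam \<Longrightarrow> beta i \<le> n"
proof -
  assume i: "1 \<le> i" "i \<le> length lam"
  have "beta i \<le> beta 1"
    using beta_strict_antimono[of 1 i] i by (cases "i = 1") auto
  moreover have "part lam 1 - 1 \<le> (\<Sum>r=1..length lam. part lam r - 1)"
    using i by (intro member_le_sum) auto
  ultimately show ?thesis
    using sum_part_minus_one part_pos[of 1] i by (simp add: beta_def)
qed

lemma hook_pos_le: "x \<in> young_diagram lam \<Longrightarrow> 0 < case_prod (hook lam) x \<and> case_prod (hook lam) x \<le> n"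
  using hook_pos_le_beta beta_le by (fastforce simp: young_diagram_def)

lemma finite_young_diagram: "finite (young_diagram lam)"
proof (rule finite_subset)
  show "young_diagram lam \<subseteq> {1..length lam} \<times> {1..part lam 1}"
  proof (safe)
    fix i j
    assume "(i, j) \<in> young_diagram lam"
    then have "1 \<le> i" "i \<le> length lam" "1 \<le> j" "j \<le> part lam i"
      by (auto simp: young_diagram_def)
    moreover have "part lam i \<le> part lam 1"
      using part_antimono[of 1 i] \<open>1 \<le> i\<close> by simp
    ultimately show "i \<in> {1..length lam}" "j \<in> {1..part lam 1}"
      by simp_all
  qed
qed simp

lemma hook_off_first_column_le:
  assumes "1 \<le> i" "i \<le> length lam" "2 \<le> j" "j \<le> part lam i"
  shows "hook lam i j + length lam \<le> n"
proof -
  let ?c = "conj_part lam j"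
  have "i \<le> ?c" "?c \<le> length lam"
    using le_conj_part_iff[of i j] assms conj_part_le_length by simp_all
  have "part lam i - 1 + (?c - i) = (part lam i - 1) + (\<Sum>r=i+1..?c. 1)"
    by simp
  also have "\<dots> \<le> (part lam i - 1) + (\<Sum>r=i+1..?c. part lam r - 1)"
    using le_conj_part_iff assms by (intro add_left_mono sum_mono) fastforce
  also have "\<dots> = (\<Sum>r=i..?c. part lam r - 1)"
    using \<open>i \<le> ?c\<close> by (simp add: sum.atLeast_Suc_atMost)
  also have "\<dots> \<le> (\<Sum>r=1..length lam. part lam r - 1)"
    using assms \<open>?c \<le> length lam\<close> by (intro sum_mono2) auto
  finally show ?thesis
    using sum_part_minus_one assms \<open>i \<le> ?c\<close> by (simp add: hook_def)
qed

lemma fch_eq_beta_image: "fch lam = beta ` {1..length lam}"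
proof -
  have "fch lam = (\<lambda>i. hook lam i 1) ` {1..length lam}"
    by (auto simp: fch_def num_parts_def)
  also have "\<dots> = beta ` {1..length lam}"
    using hook_first_column by (intro image_cong) simp_all
  finally show ?thesis .
qed

lemma fch_subset_atLeastAtMost: "fch lam \<subseteq> {1..n}"
proof -
  have "beta i \<in> {1..n}" if "1 \<le> i" "i \<le> length lam" for i
    using that hook_first_column[of i] hook_pos_le_beta[of i 1] part_pos[of i] beta_le[of i] by simp
  then show ?thesis
    unfolding fch_eq_beta_image by auto
qed

lemma f_lam_eq_fact_div_prod_hook: "f_lam lam = fact n div (\<Prod>x\<in>young_diagram lam. case_prod (hook lam) x)"
  using is_partition by (simp add: f_lam_def is_partition_def)

lemma prime_dvd_f_lam:
  assumes "prime q" "card {x \<in> young_diagram lam. q dvd case_prod (hook lam) x} < n div q"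
  shows "q dvd f_lam lam"
  unfolding f_lam_eq_fact_div_prod_hook
  using finite_young_diagram hook_pos_le card_hooks_dvd_le assms by (rule prime_dvd_fact_div_prod)

lemma hook_dvd_imp_first_column:
  assumes "n - mult_one lam \<le> q" "(i, j) \<in> young_diagram lam" "q dvd hook lam i j"
  shows "j = 1"
proof (rule ccontr)
  assume "j \<noteq> 1"
  with assms(2) have node: "1 \<le> i" "i \<le> length lam" "2 \<le> j" "j \<le> part lam i"
    by (auto simp: young_diagram_def)
  then have "lam ! (i - 1) \<in> set lam" "lam ! (i - 1) \<noteq> 1"
    by (auto simp: part_def)
  then have "length (filter ((=) 1) lam) < length lam"
    by (intro length_filter_less) auto
  then have "mult_one lam < length lam"
    by (simp add: mult_one_def count_list_eq_length_filter)
  then have "hook lam i j < q"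
    using hook_off_first_column_le[OF node] assms(1) by linarith
  moreover have "0 < hook lam i j"
    using hook_pos_le_beta node by simp
  ultimately show False
    using assms(3) by (simp add: nat_dvd_not_less)
qed

lemma card_hooks_dvd_le_card_fch:
  assumes "n - mult_one lam \<le> q"
  shows "card {x \<in> young_diagram lam. q dvd case_prod (hook lam) x} \<le> card {t \<in> fch lam. q dvd t}"
proof (rule card_inj_on_le)
  have first_column: "\<exists>i. x = (i, 1) \<and> 1 \<le> i \<and> i \<le> length lam"
    if "x \<in> young_diagram lam" "q dvd case_prod (hook lam) x" for x
    using that hook_dvd_imp_first_column[OF assms] by (auto simp: young_diagram_def)
  show "inj_on (case_prod (hook lam)) {x \<in> young_diagram lam. q dvd case_prod (hook lam) x}"
  proof (rule inj_onI)
    fix x y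
    assume "x \<in> {x \<in> young_diagram lam. q dvd case_prod (hook lam) x}"
      and "y \<in> {x \<in> young_diagram lam. q dvd case_prod (hook lam) x}"
      and eq: "case_prod (hook lam) x = case_prod (hook lam) y"
    then obtain i i' where "x = (i, 1)" "y = (i', 1)" "i \<in> {1..length lam}" "i' \<in> {1..length lam}"
      using first_column by (metis (no_types, lifting) atLeastAtMost_iff mem_Collect_eq)
    with eq show "x = y"
      using hook_first_column inj_onD[OF inj_on_beta] by auto
  qed
  show "case_prod (hook lam) ` {x \<in> young_diagram lam. q dvd case_prod (hook lam) x} \<subseteq> {t \<in> fch lam. q dvd t}"
    using hook_dvd_imp_first_column[OF assms] by (force simp: young_diagram_def fch_def num_parts_def)
qed (simp add: fch_eq_beta_image)

end

theorem proposition7p3: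
  fixes lam :: "nat list" and n q :: nat
  assumes "is_partition lam n"
    and "prime q"
    and "n - mult_one lam \<le> q" and "q \<le> n"
    and "\<not> q dvd f_lam lam"
  shows "\<forall>k. 1 \<le> k \<and> k \<le> n div q \<longrightarrow> k * q \<in> fch lam"
proof (intro allI impI, rule ccontr)
  interpret integer_partition lam n
    by (rule integer_partition.intro) fact
  fix k
  assume k: "1 \<le> k \<and> k \<le> n div q" and missing: "k * q \<notin> fch lam"
  have "k * q \<in> {t \<in> {1..n}. q dvd t}"
    using k prime_gt_0_nat[OF assms(2)] by (auto simp: less_eq_div_iff_mult_less_eq)
  moreover have "{t \<in> fch lam. q dvd t} \<subseteq> {t \<in> {1..n}. q dvd t}"
    using fch_subset_atLeastAtMost by blast
  ultimately have "card {t \<in> fch lam. q dvd t} < card {t \<in> {1..n}. q dvd t}"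
    using missing by (intro psubset_card_mono) auto
  then have "card {x \<in> young_diagram lam. q dvd case_prod (hook lam) x} < n div q"
    using card_hooks_dvd_le_card_fch[OF assms(3)]
      card_multiples_atLeastAtMost[OF prime_gt_0_nat[OF assms(2)], of n]
    by simp
  then show False
    using prime_dvd_f_lam assms(2,5) by blast
qed

end
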